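(* Let $I$ be an open interval of $\mathbb R$, and for each positive integer $n$ let $V_n$ be the set of all complex-valued functions $f$ on $I$ having $n$ continuous derivatives and satisfying $f^{(n)}=f$ (equivalently, $V_n$ is spanned by $e^{t},e^{\omega t},\dots,e^{\omega^{n-1}t}$ where $\omega$ is a primitive $n$-th root of unity). Let $\mathcal V=\{V_n\mid n\in\mathbb Z^{+}\}$, partially ordered by $V_k\leqslant V_n$ if and only if $k$ divides $n$ (equivalently, $V_k$ is a subspace of $V_n$). Regarding $(\mathcal V,\leqslant)$ and $\mathbb Z^{+}_D$ as categories, they are equivalent.
   Context: $\mathbb Z^{+}_D$ denotes the positive integers partially ordered by divisibility ($k\leqslant n$ iff $n=kt$ for some positive integer $t$). A partially ordered set is regarded as a category with one arrow $x\to y$ exactly when $x\leqslant y$. *)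

theory Defs
  imports "HOL-Analysis.Analysis"
begin

text \<open>V_n on an interval I: complex-valued functions on I (represented as total
functions that vanish outside I) having n continuous derivatives on I,
with f^(n) = f on I.\<close>

definition Vsp :: "real set \<Rightarrow> nat \<Rightarrow> (real \<Rightarrow> complex) set" where
  "Vsp I n = {f. (\<forall>t. t \<notin> I \<longrightarrow> f t = 0) \<and>
     (\<exists>ds :: nat \<Rightarrow> real \<Rightarrow> complex. ds 0 = f \<and>
        (\<forall>k<n. \<forall>t\<in>I. (ds k has_vector_derivative ds (Suc k) t) (at t)) \<and>
        continuous_on I (ds n) \<and>
        (\<forall>t\<in>I. ds n t = f t))}"

definition Vfam :: "real set \<Rightarrow> (real \<Rightarrow> complex) set set" where
  "Vfam I = {Vsp I n | n. n > 0}"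

definition Vle :: "real set \<Rightarrow> (real \<Rightarrow> complex) set \<Rightarrow> (real \<Rightarrow> complex) set \<Rightarrow> bool" where
  "Vle I A B = (\<exists>k n. k > 0 \<and> n > 0 \<and> A = Vsp I k \<and> B = Vsp I n \<and> k dvd n)"

text \<open>Posets (A, le) regarded as thin categories: a functor is a monotone map
between carriers; a natural isomorphism between two functors into a thin
category is a family of isomorphisms F x \<rightarrow> G x (naturality is automatic);
an equivalence is a pair of functors whose composites are naturally
isomorphic to the identities.\<close>

definition poset_functor :: "'a set \<Rightarrow> ('a \<Rightarrow> 'a \<Rightarrow> bool) \<Rightarrow> 'b set \<Rightarrow> ('b \<Rightarrow> 'b \<Rightarrow> bool) \<Rightarrow> ('a \<Rightarrow> 'b) \<Rightarrow> bool" where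
  "poset_functor A leA B leB F =
     ((\<forall>x\<in>A. F x \<in> B) \<and> (\<forall>x\<in>A. \<forall>y\<in>A. leA x y \<longrightarrow> leB (F x) (F y)))"

definition poset_nat_iso :: "'a set \<Rightarrow> ('b \<Rightarrow> 'b \<Rightarrow> bool) \<Rightarrow> ('a \<Rightarrow> 'b) \<Rightarrow> ('a \<Rightarrow> 'b) \<Rightarrow> bool" where
  "poset_nat_iso A leB F G = (\<forall>x\<in>A. leB (F x) (G x) \<and> leB (G x) (F x))"

definition poset_cat_equivalent :: "'a set \<Rightarrow> ('a \<Rightarrow> 'a \<Rightarrow> bool) \<Rightarrow> 'b set \<Rightarrow> ('b \<Rightarrow> 'b \<Rightarrow> bool) \<Rightarrow> bool" where
  "poset_cat_equivalent A leA B leB =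
     (\<exists>F G. poset_functor A leA B leB F \<and> poset_functor B leB A leA G \<and>
        poset_nat_iso A leA (G \<circ> F) id \<and> poset_nat_iso B leB (F \<circ> G) id)"

end

theory Submission
  imports Defs
begin

text \<open>Restricted to I, the exponential t \<mapsto> e^{wt} lies in V_n exactly when w^n = 1, since its
k-th derivative on I is w^k e^{wt}.  Taking w = e^{2\<pi>i/n}, a primitive n-th root of unity,
shows that V_m = V_n forces n | m and m | n.  So n \<mapsto> V_n is a bijection from the positive
integers onto \<V>, and it transports divisibility to the order of \<V> by the very definition of
that order; an order-isomorphism of posets is an equivalence of the associated categories.
The argument only uses that I is open and nonempty, not that it is an interval.\<close>

lemma poset_cat_equivalent_image:
  assumes inj: "inj_on g A"
    and refl: "\<And>x. x \<in> A \<Longrightarrow> le x x"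
    and le_image: "\<And>x y. x \<in> A \<Longrightarrow> y \<in> A \<Longrightarrow> le' (g x) (g y) \<longleftrightarrow> le x y"
  shows "poset_cat_equivalent (g ` A) le' A le"
proof -
  let ?h = "the_inv_into A g"
  have h_g: "?h (g x) = x" if "x \<in> A" for x
    using the_inv_into_f_f[OF inj that] .
  have "poset_functor (g ` A) le' A le ?h"
    unfolding poset_functor_def using h_g le_image by auto
  moreover have "poset_functor A le (g ` A) le' g"
    unfolding poset_functor_def using le_image by auto
  moreover have "poset_nat_iso (g ` A) le' (g \<circ> ?h) id"
    unfolding poset_nat_iso_def using h_g le_image refl by auto
  moreover have "poset_nat_iso A le (?h \<circ> g) id"
    unfolding poset_nat_iso_def using h_g refl by auto
  ultimately show ?thesis
    unfolding poset_cat_equivalent_def by blast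
qed

lemma exp_2pi_div_pow_eq_1_iff:
  fixes m n :: nat
  assumes "n > 0"
  shows "exp (2 * pi * \<i> / n) ^ m = 1 \<longleftrightarrow> n dvd m"
proof -
  have "exp (2 * pi * \<i> / n) ^ m = exp (\<i> * complex_of_real (2 * pi * real m / real n))"
    by (simp flip: exp_of_nat_mult add: field_simps)
  also have "\<dots> = 1 \<longleftrightarrow> (\<exists>k::int. 2 * pi * real m / real n = 2 * real_of_int k * pi)"
    by (simp add: exp_eq_1)
  also have "\<dots> \<longleftrightarrow> (\<exists>k::int. real m = real n * real_of_int k)"
    using assms by (simp add: field_simps)
  also have "\<dots> \<longleftrightarrow> n dvd m"
    by (metis dvd_def int_dvd_int_iff of_int_eq_iff of_int_mult of_int_of_nat_eq)
  finally show ?thesis .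
qed

definition exp_on :: "real set \<Rightarrow> complex \<Rightarrow> real \<Rightarrow> complex" where
  "exp_on I w t = (if t \<in> I then exp (w * complex_of_real t) else 0)"

lemma scaled_exp_has_vector_derivative:
  "((\<lambda>t. c * exp (w * complex_of_real t)) has_vector_derivative
     c * w * exp (w * complex_of_real t)) (at t)"
proof -
  have "((\<lambda>t. exp (w * complex_of_real t)) has_vector_derivative w * exp (w * complex_of_real t)) (at t)"
    using exp_scaleR_has_vector_derivative_right[of w t]
    by (simp add: scaleR_conv_of_real mult.commute)
  then show ?thesis
    using has_vector_derivative_mult_right by (fastforce simp: mult.assoc)
qed

lemma scaled_exp_on_has_vector_derivative:
  assumes "open I" "t \<in> I"
  shows "((\<lambda>t. if t \<in> I then c * exp (w * complex_of_real t) else 0) has_vector_derivative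
     c * w * exp (w * complex_of_real t)) (at t)"
  by (rule has_vector_derivative_transform_within_open[OF scaled_exp_has_vector_derivative assms])
    simp

lemma exp_on_in_Vsp:
  assumes "open I" "w ^ n = 1"
  shows "exp_on I w \<in> Vsp I n"
proof -
  define ds where "ds k t = (if t \<in> I then w ^ k * exp (w * complex_of_real t) else 0)" for k t
  have "ds 0 = exp_on I w"
    by (simp add: ds_def exp_on_def fun_eq_iff)
  moreover have "(ds k has_vector_derivative ds (Suc k) t) (at t)" if "t \<in> I" for k t
    using scaled_exp_on_has_vector_derivative[OF assms(1) that, of "w ^ k" w] that
    unfolding ds_def by (simp add: mult_ac)
  moreover have "continuous_on I (ds n)"
    by (rule continuous_on_eq[of _ "\<lambda>t. w ^ n * exp (w * complex_of_real t)"])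
      (auto simp: ds_def intro!: continuous_intros)
  moreover have "\<forall>t\<in>I. ds n t = exp_on I w t"
    using assms(2) by (simp add: ds_def exp_on_def)
  ultimately show ?thesis
    unfolding Vsp_def by (auto simp: exp_on_def)
qed

lemma derivatives_of_exp_on:
  assumes "open I" "ds 0 = exp_on I w"
    and deriv: "\<forall>k<m. \<forall>t\<in>I. (ds k has_vector_derivative ds (Suc k) t) (at t)"
    and "k \<le> m" "t \<in> I"
  shows "ds k t = w ^ k * exp (w * complex_of_real t)"
  using \<open>k \<le> m\<close> \<open>t \<in> I\<close>
proof (induction k arbitrary: t)
  case 0
  then show ?case
    using assms(2) by (simp add: exp_on_def)
next
  case (Suc k)
  have "(ds k has_vector_derivative ds (Suc k) t) (at t)"
    using deriv Suc.prems by auto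
  moreover have "(ds k has_vector_derivative w ^ k * w * exp (w * complex_of_real t)) (at t)"
    by (rule has_vector_derivative_transform_within_open
        [OF scaled_exp_has_vector_derivative assms(1) \<open>t \<in> I\<close>])
      (use Suc in auto)
  ultimately show ?case
    by (simp add: vector_derivative_unique_at mult_ac)
qed

lemma exp_on_in_Vsp_iff:
  assumes "open I" "I \<noteq> {}"
  shows "exp_on I w \<in> Vsp I n \<longleftrightarrow> w ^ n = 1"
proof
  assume "exp_on I w \<in> Vsp I n"
  then obtain ds where "ds 0 = exp_on I w"
    and "\<forall>k<n. \<forall>t\<in>I. (ds k has_vector_derivative ds (Suc k) t) (at t)"
    and "\<forall>t\<in>I. ds n t = exp_on I w t"
    unfolding Vsp_def by blast
  moreover obtain t where "t \<in> I"
    using assms(2) by blast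
  ultimately have "w ^ n * exp (w * complex_of_real t) = exp (w * complex_of_real t)"
    using derivatives_of_exp_on[OF assms(1)] by (metis exp_on_def order_refl)
  then show "w ^ n = 1"
    by simp
qed (rule exp_on_in_Vsp[OF assms(1)])

lemma Vsp_eq_imp_dvd:
  assumes "open I" "I \<noteq> {}" "m > 0" "Vsp I m = Vsp I n"
  shows "m dvd n"
proof -
  let ?\<omega> = "exp (2 * pi * \<i> / m)"
  have "?\<omega> ^ m = 1"
    using exp_2pi_div_pow_eq_1_iff[OF \<open>m > 0\<close>] by simp
  then have "exp_on I ?\<omega> \<in> Vsp I n"
    using exp_on_in_Vsp_iff[OF assms(1,2)] assms(4) by blast
  then show ?thesis
    using exp_on_in_Vsp_iff[OF assms(1,2)] exp_2pi_div_pow_eq_1_iff[OF \<open>m > 0\<close>] by blast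
qed

lemma inj_on_Vsp:
  assumes "open I" "I \<noteq> {}"
  shows "inj_on (Vsp I) {n. n > 0}"
  by (rule inj_onI) (simp add: Vsp_eq_imp_dvd[OF assms] dvd_antisym)

theorem mainTheorem5:
  fixes I :: "real set"
  assumes "open I" and "is_interval I" and "I \<noteq> {}"
  shows "poset_cat_equivalent (Vfam I) (Vle I) {n :: nat. n > 0} (dvd)"
proof -
  have inj: "inj_on (Vsp I) {n. n > 0}"
    using inj_on_Vsp[OF assms(1,3)] .
  have "Vfam I = Vsp I ` {n. n > 0}"
    unfolding Vfam_def by auto
  moreover have "Vle I (Vsp I k) (Vsp I n) \<longleftrightarrow> k dvd n" if "k > 0" "n > 0" for k n
    using inj_onD[OF inj] that unfolding Vle_def by (auto 6 0)
  ultimately show ?thesis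
    using poset_cat_equivalent_image[OF inj] by simp
qed

end
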